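(* Let $\lambda\in\mathbb C\setminus\{0\}$ and $\beta=e^{-3c(\lambda)}\in(0,1)$ with $c(\lambda)=\frac13\ln\frac{\sqrt{4|\lambda|^2+1}+1}{\sqrt{4|\lambda|^2+1}-1}$. Let $\Lambda_0=[a,b]$, $\xi\in\mathcal H_{\Lambda_0}$ normalized, $k\in\mathbb N_0$, and $A$ an operator supported in $\Lambda_k=[a,b+3k]$. For $n\ge0$ let $\psi_n=\xi\otimes\widehat\varphi_{k+n}\in\mathcal H_{[a,b+3(k+n)]}$, where $\widehat\varphi=\varphi/\|\varphi\|$ and $\varphi_{k+n}$ sits on $[b+1,b+3(k+n)]$. Then for all $m>n\ge1$, $$\big|\langle\psi_m,A\psi_m\rangle-\langle\psi_n,A\psi_n\rangle\big|\le2(1+\beta-\beta^3)\|A\|\beta^n.$$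
   Context: $\mathcal H_\Lambda=\bigotimes_{x\in\Lambda}\mathbb C^2$ with basis $|1\rangle,|0\rangle$ per site and product basis $|\boldsymbol\sigma\rangle$; an operator supported in $X$ acts as the identity outside $X$. For $L\in\mathbb N$, $\varphi_L\in\bigotimes_{x=1}^{3L}\mathbb C^2$ (transported to any interval of length $3L$) is $\varphi_L=\sum_{\mathbf D}\lambda^{\#(\mathbf D)}|\boldsymbol\sigma(\mathbf D)\rangle$, summing over all tilings $\mathbf D$ obtained from $L$ consecutive monomers (length 3, content $100$) by replacing some disjoint pairs of consecutive monomers by a dimer (length 6, content $011000$); $\#(\mathbf D)$ is the number of dimers and $\boldsymbol\sigma(\mathbf D)$ the concatenated 0/1 content. $\varphi_0=1$. *)

theory Defs
  imports Complex_Main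
begin

text \<open>States on a chain of N sites (sites labelled 1..N relative to the left end of the
interval) are functions on configurations, i.e. boolean lists of length N
(True = |1>, False = |0>). Only values on lists of length N matter.\<close>

definition lists_of_len :: "nat \<Rightarrow> bool list set" where
  "lists_of_len N = {xs. length xs = N}"

definition inner_st :: "nat \<Rightarrow> (bool list \<Rightarrow> complex) \<Rightarrow> (bool list \<Rightarrow> complex) \<Rightarrow> complex" where
  "inner_st N u v = (\<Sum>\<sigma>\<in>lists_of_len N. cnj (u \<sigma>) * v \<sigma>)"

definition norm_st :: "nat \<Rightarrow> (bool list \<Rightarrow> complex) \<Rightarrow> real" where
  "norm_st N u = sqrt (\<Sum>\<sigma>\<in>lists_of_len N. (cmod (u \<sigma>))^2)"

text \<open>An operator supported on the first M sites, given by its matrix A, acting on a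
longer chain as A tensor identity.\<close>

definition apply_op :: "nat \<Rightarrow> (bool list \<Rightarrow> bool list \<Rightarrow> complex) \<Rightarrow> (bool list \<Rightarrow> complex) \<Rightarrow> (bool list \<Rightarrow> complex)" where
  "apply_op M A u = (\<lambda>\<sigma>. \<Sum>\<tau>\<in>lists_of_len M. A (take M \<sigma>) \<tau> * u (\<tau> @ drop M \<sigma>))"

definition op_norm :: "nat \<Rightarrow> (bool list \<Rightarrow> bool list \<Rightarrow> complex) \<Rightarrow> real" where
  "op_norm M A = Sup {norm_st M (apply_op M A u) | u. norm_st M u \<le> 1}"

datatype tile = Mono | Dimer

fun tile_content :: "tile \<Rightarrow> bool list" where
  "tile_content Mono = [True, False, False]"
| "tile_content Dimer = [False, True, True, False, False, False]"

fun tile_len :: "tile \<Rightarrow> nat" where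
  "tile_len Mono = 1"
| "tile_len Dimer = 2"

text \<open>Tilings of L consecutive monomers: sequences of monomers / dimers (a dimer replaces
two consecutive monomers).\<close>

definition tilings :: "nat \<Rightarrow> tile list set" where
  "tilings L = {D. sum_list (map tile_len D) = L}"

definition num_dimers :: "tile list \<Rightarrow> nat" where
  "num_dimers D = count_list D Dimer"

definition config :: "tile list \<Rightarrow> bool list" where
  "config D = concat (map tile_content D)"

definition phi :: "complex \<Rightarrow> nat \<Rightarrow> bool list \<Rightarrow> complex" where
  "phi lam L = (\<lambda>\<sigma>. \<Sum>D\<in>tilings L. if config D = \<sigma> then lam ^ num_dimers D else 0)"

definition phi_hat :: "complex \<Rightarrow> nat \<Rightarrow> bool list \<Rightarrow> complex" where
  "phi_hat lam L = (\<lambda>\<sigma>. phi lam L \<sigma> / complex_of_real (norm_st (3 * L) (phi lam L)))"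

definition psi :: "nat \<Rightarrow> (bool list \<Rightarrow> complex) \<Rightarrow> complex \<Rightarrow> nat \<Rightarrow> bool list \<Rightarrow> complex" where
  "psi d xi lam L = (\<lambda>\<sigma>. xi (take d \<sigma>) * phi_hat lam L (drop d \<sigma>))"

definition c_lam :: "complex \<Rightarrow> real" where
  "c_lam lam = (1/3) * ln ((sqrt (4 * (cmod lam)^2 + 1) + 1) / (sqrt (4 * (cmod lam)^2 + 1) - 1))"

definition beta :: "complex \<Rightarrow> real" where
  "beta lam = exp (- 3 * c_lam lam)"

end

(* Cutting the monomer-dimer state after its first k blocks gives
   phi_(k+j) = phi_k (x) phi_j + lam phi_open_end_k (x) phi_open_start_j, the second term
   collecting the tilings with a dimer across the cut; phi_j and phi_open_start_j have disjoint
   supports. Hence, for A supported to the left of the cut, the expectation of A in psi_(k+j)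
   is x_j <X, A X> + y_j <Y, A Y> with X = xi (x) phi_k, Y = xi (x) phi_open_end_k and
   x_j |X|^2 + y_j |Y|^2 = 1, so two such expectations differ by at most 2 |A| |p_m - p_n|,
   where p_j = Z_k Z_j / Z_(k+j) and Z_j = |phi_j|^2. The partition function obeys
   Z_(j+2) = Z_(j+1) + |lam|^2 Z_j, which Binet's formula solves in terms of beta, and the
   bound on |p_m - p_n| reduces to a polynomial inequality in beta and the powers
   (-beta)^k, (-beta)^n, (-beta)^(m-n). *)

theory Submission
  imports Defs "HOL-Analysis.Convex"
begin

section \<open>States on a finite chain\<close>

lemma finite_lists_of_len [simp]: "finite (lists_of_len N)"
  unfolding lists_of_len_def using finite_lists_length_eq[of "UNIV :: bool set" N] by simp

lemma mem_lists_of_len [simp]: "\<sigma> \<in> lists_of_len N \<longleftrightarrow> length \<sigma> = N"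
  by (simp add: lists_of_len_def)

lemma lists_of_len_0: "lists_of_len 0 = {[]}"
  by (auto simp: lists_of_len_def)

lemma sum_lists_of_len_add:
  "(\<Sum>\<sigma>\<in>lists_of_len (M + N). f \<sigma>) = (\<Sum>\<alpha>\<in>lists_of_len M. \<Sum>\<rho>\<in>lists_of_len N. f (\<alpha> @ \<rho>))"
proof -
  have "bij_betw (\<lambda>(\<alpha>, \<rho>). \<alpha> @ \<rho>) (lists_of_len M \<times> lists_of_len N) (lists_of_len (M + N))"
    by (rule bij_betw_byWitness[where f' = "\<lambda>\<sigma>. (take M \<sigma>, drop M \<sigma>)"]) auto
  then have "(\<Sum>\<sigma>\<in>lists_of_len (M + N). f \<sigma>) = (\<Sum>(\<alpha>, \<rho>)\<in>lists_of_len M \<times> lists_of_len N. f (\<alpha> @ \<rho>))"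
    by (simp add: sum.reindex_bij_betw[symmetric] case_prod_unfold)
  also have "\<dots> = (\<Sum>\<alpha>\<in>lists_of_len M. \<Sum>\<rho>\<in>lists_of_len N. f (\<alpha> @ \<rho>))"
    by (simp add: sum.cartesian_product)
  finally show ?thesis .
qed

definition sqnorm_st :: "nat \<Rightarrow> (bool list \<Rightarrow> complex) \<Rightarrow> real" where
  "sqnorm_st N u = (\<Sum>\<sigma>\<in>lists_of_len N. (cmod (u \<sigma>))\<^sup>2)"

lemma sqnorm_st_nonneg: "0 \<le> sqnorm_st N u"
  unfolding sqnorm_st_def by (intro sum_nonneg) simp

lemma norm_st_eq_sqrt: "norm_st N u = sqrt (sqnorm_st N u)"
  by (simp add: norm_st_def sqnorm_st_def)

lemma norm_st_power2: "(norm_st N u)\<^sup>2 = sqnorm_st N u"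
  by (simp add: norm_st_eq_sqrt sqnorm_st_nonneg)

lemma norm_st_nonneg: "0 \<le> norm_st N u"
  by (simp add: norm_st_eq_sqrt sqnorm_st_nonneg)

lemma sqnorm_st_tensor:
  "sqnorm_st (M + N) (\<lambda>\<sigma>. u (take M \<sigma>) * v (drop M \<sigma>)) = sqnorm_st M u * sqnorm_st N v"
  unfolding sqnorm_st_def sum_lists_of_len_add sum_product
  by (intro sum.cong refl) (simp add: norm_mult power_mult_distrib)

lemma sqnorm_st_scale: "sqnorm_st N (\<lambda>\<sigma>. c * u \<sigma>) = (cmod c)\<^sup>2 * sqnorm_st N u"
  by (simp add: sqnorm_st_def norm_mult power_mult_distrib sum_distrib_left)

lemma norm_st_scale: "norm_st N (\<lambda>\<sigma>. c * u \<sigma>) = cmod c * norm_st N u"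
  by (simp add: norm_st_eq_sqrt sqnorm_st_scale real_sqrt_mult)

lemma norm_le_norm_st: "length \<tau> = N \<Longrightarrow> cmod (u \<tau>) \<le> norm_st N u"
  unfolding norm_st_def
  by (rule real_le_rsqrt, rule member_le_sum[where f = "\<lambda>\<sigma>. (cmod (u \<sigma>))\<^sup>2"]) auto

lemma inner_st_Cauchy_Schwarz: "cmod (inner_st N u v) \<le> norm_st N u * norm_st N v"
proof -
  have "cmod (inner_st N u v) \<le> (\<Sum>\<sigma>\<in>lists_of_len N. cmod (u \<sigma>) * cmod (v \<sigma>))"
    unfolding inner_st_def by (rule order_trans[OF norm_sum]) (simp add: norm_mult)
  also have "\<dots> \<le> sqrt ((\<Sum>\<sigma>\<in>lists_of_len N. (cmod (u \<sigma>))\<^sup>2) * (\<Sum>\<sigma>\<in>lists_of_len N. (cmod (v \<sigma>))\<^sup>2))"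
    by (rule real_le_rsqrt, rule Cauchy_Schwarz_ineq_sum)
  also have "\<dots> = norm_st N u * norm_st N v"
    unfolding norm_st_def by (simp add: real_sqrt_mult)
  finally show ?thesis .
qed

lemma op_norm_bdd_above: "bdd_above {norm_st M (apply_op M A u) | u. norm_st M u \<le> 1}"
proof -
  define B where "B = sqrt (\<Sum>\<sigma>\<in>lists_of_len M. (\<Sum>\<tau>\<in>lists_of_len M. cmod (A \<sigma> \<tau>))\<^sup>2)"
  have "norm_st M (apply_op M A u) \<le> B" if u: "norm_st M u \<le> 1" for u
  proof -
    have "cmod (apply_op M A u \<sigma>) \<le> (\<Sum>\<tau>\<in>lists_of_len M. cmod (A \<sigma> \<tau>))" if "length \<sigma> = M" for \<sigma>
    proof -
      have "cmod (apply_op M A u \<sigma>) \<le> (\<Sum>\<tau>\<in>lists_of_len M. cmod (A \<sigma> \<tau>) * cmod (u \<tau>))"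
        unfolding apply_op_def using that by (intro order_trans[OF norm_sum]) (simp add: norm_mult)
      also have "\<dots> \<le> (\<Sum>\<tau>\<in>lists_of_len M. cmod (A \<sigma> \<tau>))"
        using norm_le_norm_st[of _ M u] u
        by (intro sum_mono mult_right_le_one_le) fastforce+
      finally show ?thesis .
    qed
    then show ?thesis
      unfolding norm_st_def B_def by (intro real_sqrt_le_mono sum_mono power_mono) auto
  qed
  then show ?thesis by (intro bdd_aboveI[of _ B]) blast
qed

lemma op_norm_upper: "norm_st M u \<le> 1 \<Longrightarrow> norm_st M (apply_op M A u) \<le> op_norm M A"
  unfolding op_norm_def by (rule cSup_upper[OF _ op_norm_bdd_above]) blast

lemma apply_op_zero: "apply_op M A (\<lambda>_. 0) = (\<lambda>_. 0)"
  by (simp add: apply_op_def)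

lemma op_norm_nonneg: "0 \<le> op_norm M A"
  using op_norm_upper[of M "\<lambda>_. 0" A] by (simp add: apply_op_zero norm_st_def)

lemma apply_op_scale: "apply_op M A (\<lambda>\<sigma>. c * u \<sigma>) = (\<lambda>\<sigma>. c * apply_op M A u \<sigma>)"
  by (simp add: apply_op_def sum_distrib_left mult_ac)

lemma norm_apply_op_le: "norm_st M (apply_op M A u) \<le> op_norm M A * norm_st M u"
proof (cases "norm_st M u = 0")
  case True
  then have "u \<tau> = 0" if "length \<tau> = M" for \<tau>
    using norm_le_norm_st[OF that, of u] by simp
  then have "norm_st M (apply_op M A u) = norm_st M (apply_op M A (\<lambda>_. 0))"
    unfolding apply_op_def norm_st_def by (intro arg_cong[where f = sqrt] sum.cong) auto
  then show ?thesis
    using True by (simp add: apply_op_zero norm_st_def)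
next
  case False
  then have pos: "norm_st M u > 0"
    using norm_st_nonneg[of M u] by simp
  define c where "c = complex_of_real (1 / norm_st M u)"
  have "norm_st M (\<lambda>\<sigma>. c * u \<sigma>) = 1"
    using pos unfolding norm_st_scale c_def by (simp add: norm_divide)
  then have "norm_st M (apply_op M A (\<lambda>\<sigma>. c * u \<sigma>)) \<le> op_norm M A"
    by (intro op_norm_upper) simp
  then show ?thesis
    using pos unfolding apply_op_scale norm_st_scale c_def by (simp add: norm_divide field_simps)
qed

lemma expectation_bound: "cmod (inner_st M u (apply_op M A u)) \<le> op_norm M A * sqnorm_st M u"
proof -
  have "cmod (inner_st M u (apply_op M A u)) \<le> norm_st M u * norm_st M (apply_op M A u)"
    by (rule inner_st_Cauchy_Schwarz)
  also have "\<dots> \<le> norm_st M u * (op_norm M A * norm_st M u)"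
    by (intro mult_left_mono norm_apply_op_le norm_st_nonneg)
  finally show ?thesis
    by (simp add: norm_st_power2[symmetric] power2_eq_square mult_ac)
qed

lemma expectation_orthogonal_tails:
  assumes psi: "\<And>\<alpha> \<rho>. length \<alpha> = M \<Longrightarrow> length \<rho> = N \<Longrightarrow> \<psi> (\<alpha> @ \<rho>) = X \<alpha> * P \<rho> + Y \<alpha> * Q \<rho>"
    and disjoint: "\<And>\<rho>. P \<rho> * Q \<rho> = 0"
  shows "inner_st (M + N) \<psi> (apply_op M A \<psi>)
    = of_real (sqnorm_st N P) * inner_st M X (apply_op M A X)
    + of_real (sqnorm_st N Q) * inner_st M Y (apply_op M A Y)"
proof -
  have A\<psi>: "apply_op M A \<psi> (\<alpha> @ \<rho>) = P \<rho> * apply_op M A X \<alpha> + Q \<rho> * apply_op M A Y \<alpha>"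
    if "length \<alpha> = M" "length \<rho> = N" for \<alpha> \<rho>
    using that psi by (simp add: apply_op_def sum_distrib_left sum.distrib[symmetric] algebra_simps)
  have sq: "cnj z * z = of_real ((cmod z)\<^sup>2)" for z
    by (metis complex_norm_square mult.commute)
  have "cnj (\<psi> (\<alpha> @ \<rho>)) * apply_op M A \<psi> (\<alpha> @ \<rho>)
      = of_real ((cmod (P \<rho>))\<^sup>2) * (cnj (X \<alpha>) * apply_op M A X \<alpha>)
      + of_real ((cmod (Q \<rho>))\<^sup>2) * (cnj (Y \<alpha>) * apply_op M A Y \<alpha>)"
    if "length \<alpha> = M" "length \<rho> = N" for \<alpha> \<rho>
  proof -
    have "P \<rho> = 0 \<or> Q \<rho> = 0"
      using disjoint[of \<rho>] by simp
    then show ?thesis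
      unfolding psi[OF that] A\<psi>[OF that] sq[symmetric] by (auto simp: algebra_simps)
  qed
  then show ?thesis
    unfolding inner_st_def sqnorm_st_def sum_lists_of_len_add of_real_sum sum_product
    by (simp add: sum.distrib sum.swap[of _ "lists_of_len N"] sum_distrib_left sum_distrib_right mult_ac)
qed

section \<open>Monomer-dimer tilings\<close>

lemma tile_len_pos: "0 < tile_len t"
  by (cases t) auto

lemma tile_len_neq_0 [simp]: "tile_len t \<noteq> 0"
  by (cases t) auto

lemma sum_tile_len_eq_0_iff [simp]: "sum_list (map tile_len D) = 0 \<longleftrightarrow> D = []"
  by (cases D) auto

lemma tilings_0: "tilings 0 = {[]}"
  by (auto simp: tilings_def)

lemma tilings_1: "tilings (Suc 0) = {[Mono]}"
proof -
  have "D = [Mono]" if "sum_list (map tile_len D) = 1" for D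
  proof (cases D)
    case (Cons t D')
    with that have "tile_len t + sum_list (map tile_len D') = 1"
      by simp
    with tile_len_pos[of t] have "tile_len t = 1" "sum_list (map tile_len D') = 0"
      by linarith+
    then show ?thesis
      using Cons by (cases t) auto
  qed (use that in simp)
  then show ?thesis by (auto simp: tilings_def)
qed

lemma tilings_Suc_Suc:
  "tilings (Suc (Suc L)) = Cons Mono ` tilings (Suc L) \<union> Cons Dimer ` tilings L"
proof (rule set_eqI, rule iffI)
  fix D assume D: "D \<in> tilings (Suc (Suc L))"
  then obtain t D' where "D = t # D'"
    by (cases D) (auto simp: tilings_def)
  with D show "D \<in> Cons Mono ` tilings (Suc L) \<union> Cons Dimer ` tilings L"
    by (cases t) (auto simp: tilings_def)
qed (auto simp: tilings_def)

lemma finite_tilings: "finite (tilings L)"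
proof (rule finite_subset)
  have "length D \<le> sum_list (map tile_len D)" for D
    using sum_list_mono[of D "\<lambda>_. 1" tile_len] tile_len_pos by (simp add: Suc_le_eq sum_list_triv)
  moreover have "t \<in> {Mono, Dimer}" for t
    by (cases t) auto
  ultimately show "tilings L \<subseteq> {D. set D \<subseteq> {Mono, Dimer} \<and> length D \<le> L}"
    by (auto simp: tilings_def)
qed (simp add: finite_lists_length_le)

lemma config_Nil [simp]: "config [] = []"
  by (simp add: config_def)

lemma config_Cons [simp]: "config (t # D) = tile_content t @ config D"
  by (simp add: config_def)

lemma num_dimers_Cons: "num_dimers (t # D) = num_dimers [t] + num_dimers D"
  by (simp add: num_dimers_def)

lemma sum_Cons_tilings:
  assumes "length (tile_content t) = n"
  shows "(\<Sum>D\<in>Cons t ` tilings L. if config D = \<sigma> then lam ^ num_dimers D else 0)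
    = (if take n \<sigma> = tile_content t then lam ^ num_dimers [t] * phi lam L (drop n \<sigma>) else 0)"
proof -
  have "(if config (t # D) = \<sigma> then lam ^ num_dimers (t # D) else 0)
      = (if take n \<sigma> = tile_content t
          then lam ^ num_dimers [t] * (if config D = drop n \<sigma> then lam ^ num_dimers D else 0) else 0)"
    for D using assms by (auto simp: append_eq_conv_conj num_dimers_Cons[of t D] power_add)
  then have "(\<Sum>D\<in>Cons t ` tilings L. if config D = \<sigma> then lam ^ num_dimers D else 0)
      = (\<Sum>D\<in>tilings L. if take n \<sigma> = tile_content t
          then lam ^ num_dimers [t] * (if config D = drop n \<sigma> then lam ^ num_dimers D else 0) else 0)"
    by (simp add: sum.reindex)
  then show ?thesis
    by (simp add: phi_def sum_distrib_left)
qed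

lemma phi_0: "phi lam 0 \<sigma> = (if \<sigma> = [] then 1 else 0)"
  by (simp add: phi_def tilings_0 num_dimers_def)

lemma phi_1: "phi lam (Suc 0) \<sigma> = (if \<sigma> = [True, False, False] then 1 else 0)"
  by (auto simp: phi_def tilings_1 num_dimers_def)

lemma phi_Suc_Suc:
  "phi lam (Suc (Suc L)) \<sigma>
    = (if take 3 \<sigma> = [True, False, False] then phi lam (Suc L) (drop 3 \<sigma>) else 0)
    + (if take 6 \<sigma> = [False, True, True, False, False, False] then lam * phi lam L (drop 6 \<sigma>) else 0)"
proof -
  let ?f = "\<lambda>D. if config D = \<sigma> then lam ^ num_dimers D else 0"
  have len: "length (tile_content Mono) = 3" "length (tile_content Dimer) = 6"
    by simp_all
  have "phi lam (Suc (Suc L)) \<sigma> = sum ?f (Cons Mono ` tilings (Suc L)) + sum ?f (Cons Dimer ` tilings L)"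
    unfolding phi_def tilings_Suc_Suc by (rule sum.union_disjoint) (auto simp: finite_tilings)
  also have "\<dots> = (if take 3 \<sigma> = [True, False, False] then phi lam (Suc L) (drop 3 \<sigma>) else 0)
    + (if take 6 \<sigma> = [False, True, True, False, False, False] then lam * phi lam L (drop 6 \<sigma>) else 0)"
    unfolding sum_Cons_tilings[OF len(1)] sum_Cons_tilings[OF len(2)] by (simp add: num_dimers_def)
  finally show ?thesis .
qed

text \<open>phi_open_end k weighs the tilings of k blocks followed by the left half 011 of a dimer,
phi_open_start j those of j blocks preceded by its right half 000: a tiling of k + j blocks
either respects the cut after block k or has a dimer across it (phi_append).\<close>

fun phi_open_end :: "complex \<Rightarrow> nat \<Rightarrow> bool list \<Rightarrow> complex" where
  "phi_open_end lam 0 \<tau> = 0"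
| "phi_open_end lam (Suc 0) \<tau> = (if \<tau> = [False, True, True] then 1 else 0)"
| "phi_open_end lam (Suc (Suc k)) \<tau>
    = (if take 3 \<tau> = [True, False, False] then phi_open_end lam (Suc k) (drop 3 \<tau>) else 0)
    + (if take 6 \<tau> = [False, True, True, False, False, False] then lam * phi_open_end lam k (drop 6 \<tau>) else 0)"

fun phi_open_start :: "complex \<Rightarrow> nat \<Rightarrow> bool list \<Rightarrow> complex" where
  "phi_open_start lam 0 \<rho> = 0"
| "phi_open_start lam (Suc j) \<rho> = (if take 3 \<rho> = [False, False, False] then phi lam j (drop 3 \<rho>) else 0)"

lemma length_3_cases:
  assumes "length \<tau> = 3"
  obtains a b c where "\<tau> = [a, b, c]"
  using assms by (auto simp: numeral_3_eq_3 length_Suc_conv)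

lemma phi_append:
  "length \<tau> = 3 * k \<Longrightarrow> length \<rho> = 3 * j \<Longrightarrow>
   phi lam (k + j) (\<tau> @ \<rho>) = phi lam k \<tau> * phi lam j \<rho> + lam * phi_open_end lam k \<tau> * phi_open_start lam j \<rho>"
proof (induction lam k \<tau> rule: phi_open_end.induct)
  case (1 lam \<tau>)
  then show ?case by (simp add: phi_0)
next
  case (2 lam \<tau>)
  then obtain a b c where \<tau>: "\<tau> = [a, b, c]"
    by (auto elim: length_3_cases)
  show ?case
  proof (cases j)
    case 0
    then show ?thesis using 2 by (simp add: phi_0)
  next
    case (Suc j')
    then show ?thesis
      by (simp add: \<tau> phi_Suc_Suc phi_1 numeral_eq_Suc)
  qed
next
  case (3 lam k \<tau>)
  then have split: "take 3 (\<tau> @ \<rho>) = take 3 \<tau>" "drop 3 (\<tau> @ \<rho>) = drop 3 \<tau> @ \<rho>"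
    "take 6 (\<tau> @ \<rho>) = take 6 \<tau>" "drop 6 (\<tau> @ \<rho>) = drop 6 \<tau> @ \<rho>"
    by auto
  have "phi lam (Suc (Suc k) + j) (\<tau> @ \<rho>)
      = (if take 3 \<tau> = [True, False, False] then phi lam (Suc k + j) (drop 3 \<tau> @ \<rho>) else 0)
      + (if take 6 \<tau> = [False, True, True, False, False, False]
         then lam * phi lam (k + j) (drop 6 \<tau> @ \<rho>) else 0)"
    using phi_Suc_Suc[of lam "k + j" "\<tau> @ \<rho>"] unfolding split by simp
  also have "\<dots> = phi lam (Suc (Suc k)) \<tau> * phi lam j \<rho>
      + lam * phi_open_end lam (Suc (Suc k)) \<tau> * phi_open_start lam j \<rho>"
    using 3 by (simp add: phi_Suc_Suc[of lam k \<tau>] algebra_simps)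
  finally show ?case .
qed

lemma phi_mult_phi_open_start: "phi lam j \<rho> * phi_open_start lam j \<rho> = 0"
proof (cases "j = 0 \<or> take 3 \<rho> \<noteq> [False, False, False]")
  case False
  then obtain j' where j: "j = Suc j'" and \<rho>: "take 3 \<rho> = [False, False, False]"
    by (cases j) auto
  have "take 6 \<rho> \<noteq> [False, True, True, False, False, False]"
  proof
    assume "take 6 \<rho> = [False, True, True, False, False, False]"
    then have "take 3 (take 6 \<rho>) = [False, True, True]"
      by (simp add: numeral_eq_Suc)
    with \<rho> show False
      by simp
  qed
  with \<rho> have "phi lam j \<rho> = 0"
    unfolding j by (cases j') (auto simp: phi_1 phi_Suc_Suc)
  then show ?thesis by simp
qed (cases j, auto)

section \<open>The partition function\<close>

definition partition_fn :: "complex \<Rightarrow> nat \<Rightarrow> real" where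
  "partition_fn lam L = sqnorm_st (3 * L) (phi lam L)"

lemma partition_fn_add:
  "partition_fn lam (k + j) = partition_fn lam k * partition_fn lam j
    + (cmod lam)\<^sup>2 * sqnorm_st (3 * k) (phi_open_end lam k) * sqnorm_st (3 * j) (phi_open_start lam j)"
proof -
  have "(cmod (phi lam (k + j) (\<tau> @ \<rho>)))\<^sup>2
      = (cmod (phi lam k \<tau>))\<^sup>2 * (cmod (phi lam j \<rho>))\<^sup>2
      + (cmod lam)\<^sup>2 * ((cmod (phi_open_end lam k \<tau>))\<^sup>2 * (cmod (phi_open_start lam j \<rho>))\<^sup>2)"
    if "length \<tau> = 3 * k" "length \<rho> = 3 * j" for \<tau> \<rho>
  proof -
    have "phi lam j \<rho> = 0 \<or> phi_open_start lam j \<rho> = 0"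
      using phi_mult_phi_open_start[of lam j \<rho>] by simp
    then show ?thesis
      unfolding phi_append[OF that] by (auto simp: norm_mult power_mult_distrib)
  qed
  then show ?thesis
    unfolding partition_fn_def sqnorm_st_def distrib_left sum_lists_of_len_add sum_product
    by (simp add: sum.distrib sum_distrib_left mult_ac)
qed

lemma partition_fn_0: "partition_fn lam 0 = 1"
  by (simp add: partition_fn_def sqnorm_st_def lists_of_len_0 phi_0)

lemma sqnorm_st_delta_3:
  "length c = 3 \<Longrightarrow> sqnorm_st 3 (\<lambda>\<sigma>. if \<sigma> = c then 1 else 0) = 1"
  by (simp add: sqnorm_st_def if_distrib[of "\<lambda>z. (cmod z)\<^sup>2"] sum.delta' cong: if_cong)

lemma partition_fn_1: "partition_fn lam (Suc 0) = 1"
  using sqnorm_st_delta_3[of "[True, False, False]"] by (simp add: partition_fn_def phi_1 [abs_def])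

lemma sqnorm_phi_open_end_1: "sqnorm_st 3 (phi_open_end lam (Suc 0)) = 1"
proof -
  have "phi_open_end lam (Suc 0) = (\<lambda>\<tau>. if \<tau> = [False, True, True] then 1 else 0)"
    by (rule ext) simp
  then show ?thesis
    using sqnorm_st_delta_3[of "[False, True, True]"] by simp
qed

lemma sqnorm_phi_open_start_Suc:
  "sqnorm_st (3 * Suc j) (phi_open_start lam (Suc j)) = partition_fn lam j"
proof -
  have "sqnorm_st (3 + 3 * j) (phi_open_start lam (Suc j))
      = (\<Sum>\<alpha>\<in>lists_of_len 3. if \<alpha> = [False, False, False] then partition_fn lam j else 0)"
    unfolding sqnorm_st_def sum_lists_of_len_add partition_fn_def by (intro sum.cong refl) auto
  then show ?thesis
    by simp
qed

lemma partition_fn_Suc_Suc: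
  "partition_fn lam (Suc (Suc j)) = partition_fn lam (Suc j) + (cmod lam)\<^sup>2 * partition_fn lam j"
  using partition_fn_add[of lam "Suc 0" "Suc j"] unfolding sqnorm_phi_open_start_Suc
  by (simp add: partition_fn_1 sqnorm_phi_open_end_1)

lemma beta_gt_0: "0 < beta lam"
  by (simp add: beta_def)

lemma beta_explicit:
  assumes "lam \<noteq> 0"
  shows "beta lam = (sqrt (4 * (cmod lam)\<^sup>2 + 1) - 1) / (sqrt (4 * (cmod lam)\<^sup>2 + 1) + 1)"
proof -
  define s where "s = sqrt (4 * (cmod lam)\<^sup>2 + 1)"
  have "s > 1"
    using assms by (simp add: s_def real_less_rsqrt)
  then have "beta lam = exp (- ln ((s + 1) / (s - 1)))"
    by (simp add: beta_def c_lam_def s_def)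
  also have "\<dots> = (s - 1) / (s + 1)"
    using \<open>s > 1\<close> by (simp add: exp_minus)
  finally show ?thesis by (simp add: s_def)
qed

lemma beta_lt_1:
  assumes "lam \<noteq> 0"
  shows "beta lam < 1"
proof -
  define s where "s = sqrt (4 * (cmod lam)\<^sup>2 + 1)"
  have "0 \<le> s"
    by (simp add: s_def)
  then show ?thesis
    unfolding beta_explicit[OF assms, folded s_def] by (simp add: divide_less_eq)
qed

lemma cmod_power2_beta:
  assumes "lam \<noteq> 0"
  shows "(cmod lam)\<^sup>2 = beta lam / (1 - beta lam)\<^sup>2"
proof -
  define s where "s = sqrt (4 * (cmod lam)\<^sup>2 + 1)"
  have s: "s > 1" "s\<^sup>2 = 4 * (cmod lam)\<^sup>2 + 1"
    using assms by (simp_all add: s_def real_less_rsqrt)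
  have "beta lam / (1 - beta lam)\<^sup>2 = (s\<^sup>2 - 1) / 4"
    using s(1) unfolding beta_explicit[OF assms, folded s_def] by (simp add: field_simps power2_eq_square)
  then show ?thesis
    using s(2) by simp
qed

text \<open>Since |lam|^2 = beta / (1 - beta)^2, the characteristic roots of the recursion
partition_fn_Suc_Suc are 1 / (1 - beta) and -beta / (1 - beta); this is Binet's formula.\<close>

definition binet :: "real \<Rightarrow> nat \<Rightarrow> real" where
  "binet b j = 1 - (-b) ^ Suc j"

lemma binet_Suc_Suc: "binet b (Suc (Suc j)) = (1 - b) * binet b (Suc j) + b * binet b j"
  by (simp add: binet_def algebra_simps)

lemma binet_pos:
  assumes "0 < b" "b < 1"
  shows "0 < binet b j"
proof -
  have "\<bar>(-b) ^ Suc j\<bar> = b ^ Suc j"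
    using assms by (subst power_abs) simp
  also have "\<dots> < 1"
    using assms by (rule power_Suc_less_one)
  finally show ?thesis
    unfolding binet_def by linarith
qed

lemma partition_fn_binet:
  assumes "lam \<noteq> 0"
  shows "partition_fn lam j * ((1 + beta lam) * (1 - beta lam) ^ j) = binet (beta lam) j"
proof -
  define b where "b = beta lam"
  have b: "0 < b" "b < 1"
    using beta_gt_0 beta_lt_1[OF assms] by (simp_all add: b_def)
  have t: "(cmod lam)\<^sup>2 * (1 - b)\<^sup>2 = b"
    using cmod_power2_beta[OF assms] b by (simp add: b_def)
  have "partition_fn lam j * ((1 + b) * (1 - b) ^ j) = binet b j
      \<and> partition_fn lam (Suc j) * ((1 + b) * (1 - b) ^ Suc j) = binet b (Suc j)"
  proof (induction j)
    case 0
    show ?case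
      by (simp add: partition_fn_0 partition_fn_1 binet_def algebra_simps power2_eq_square)
  next
    case (Suc j)
    have "partition_fn lam (Suc (Suc j)) * ((1 + b) * (1 - b) ^ Suc (Suc j))
        = (1 - b) * (partition_fn lam (Suc j) * ((1 + b) * (1 - b) ^ Suc j))
        + (cmod lam)\<^sup>2 * (1 - b)\<^sup>2 * (partition_fn lam j * ((1 + b) * (1 - b) ^ j))"
      unfolding partition_fn_Suc_Suc by (simp add: algebra_simps power2_eq_square)
    then show ?case
      using Suc by (simp add: t binet_Suc_Suc)
  qed
  then show ?thesis
    by (simp add: b_def)
qed

lemma partition_fn_eq_binet:
  assumes "lam \<noteq> 0"
  shows "partition_fn lam j = binet (beta lam) j / ((1 + beta lam) * (1 - beta lam) ^ j)"
proof -
  have "(1 + beta lam) * (1 - beta lam) ^ j > 0"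
    using beta_gt_0[of lam] beta_lt_1[OF assms] by (intro mult_pos_pos zero_less_power) auto
  then show ?thesis
    by (metis partition_fn_binet[OF assms] nonzero_mult_div_cancel_right order_less_irrefl)
qed

lemma partition_fn_pos:
  assumes "lam \<noteq> 0"
  shows "0 < partition_fn lam j"
  unfolding partition_fn_eq_binet[OF assms]
  using beta_gt_0[of lam] beta_lt_1[OF assms]
  by (intro divide_pos_pos mult_pos_pos zero_less_power binet_pos) auto

lemma partition_fn_ratio_binet:
  assumes "lam \<noteq> 0"
  shows "partition_fn lam k * partition_fn lam j / partition_fn lam (k + j)
    = binet (beta lam) k * binet (beta lam) j / ((1 + beta lam) * binet (beta lam) (k + j))"
proof -
  have "x / (c * q ^ k) * (y / (c * q ^ j)) / (w / (c * q ^ (k + j))) = x * y / (c * w)"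
    if "c \<noteq> 0" "q \<noteq> 0" "w \<noteq> 0" for x y w c q :: real
    using that by (simp add: power_add field_simps)
  moreover have "1 + beta lam \<noteq> 0" "1 - beta lam \<noteq> 0" "binet (beta lam) (k + j) \<noteq> 0"
    using beta_gt_0[of lam] beta_lt_1[OF assms] binet_pos[of "beta lam" "k + j"] by auto
  ultimately show ?thesis
    unfolding partition_fn_eq_binet[OF assms] by blast
qed

section \<open>An elementary inequality\<close>

lemma cubic_factor_le:
  fixes b s :: real
  assumes b: "0 < b" "b < 1" and s: "\<bar>s\<bar> \<le> b"
  shows "b * (1 + b * s) * (1 - s) \<le> (1 + b - b ^ 3) * (1 - b\<^sup>2 * \<bar>s\<bar>) * (1 + b ^ 3 * \<bar>s\<bar>)"
proof -
  define \<sigma> where "\<sigma> = \<bar>s\<bar>"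
  have \<sigma>: "0 \<le> \<sigma>" "\<sigma> * b \<le> 1"
    using s b unfolding \<sigma>_def by (auto intro: mult_le_one)
  have "(1 + b * s) * (1 - s) = 1 - (1 - b) * s - b * s\<^sup>2"
    by algebra
  also have "\<dots> \<le> 1 + (1 - b) * \<sigma> - b * \<sigma>\<^sup>2"
    using b mult_left_mono[of "- s" \<sigma> "1 - b"] by (simp add: \<sigma>_def)
  also have "\<dots> = (1 - b * \<sigma>) * (1 + \<sigma>)"
    by algebra
  finally have "b * ((1 + b * s) * (1 - s)) \<le> b * ((1 - b * \<sigma>) * (1 + \<sigma>))"
    using b by simp
  also have "\<dots> \<le> (1 + b - b ^ 3) * (1 - b\<^sup>2 * \<sigma>) * (1 + b ^ 3 * \<sigma>)"
  proof -
    have "b ^ 4 \<le> b\<^sup>2" "b ^ 5 \<le> b"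
      using b power_decreasing[of 2 4 b] power_decreasing[of 1 5 b] by auto
    then have "0 \<le> 1 + b + b\<^sup>2 - b ^ 4 - b ^ 5"
      by linarith
    with \<sigma> b have "0 \<le> (1 - b) * ((1 + b + b\<^sup>2) * (1 - \<sigma> * b) + \<sigma> * b ^ 5
        + \<sigma>\<^sup>2 * b\<^sup>2 * (1 + b + b\<^sup>2 - b ^ 4 - b ^ 5))"
      by (intro mult_nonneg_nonneg add_nonneg_nonneg) auto
    also have "\<dots> = (1 + b - b ^ 3) * (1 - b\<^sup>2 * \<sigma>) * (1 + b ^ 3 * \<sigma>) - b * ((1 - b * \<sigma>) * (1 + \<sigma>))"
      by algebra
    finally show ?thesis
      by simp
  qed
  finally show ?thesis
    unfolding \<sigma>_def by (simp add: mult.assoc)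
qed

lemma binet_cross_term_le:
  fixes b s v w :: real
  assumes b: "0 < b" "b < 1" and s: "\<bar>s\<bar> \<le> b" and v: "\<bar>v\<bar> \<le> b" and w: "\<bar>w\<bar> \<le> b"
  shows "b * (1 + b * s) * (1 - s) * (1 - w) \<le> (1 + b) * (1 + b - b ^ 3) * ((1 + b * s * v) * (1 + b * s * v * w))"
proof -
  define X where "X = b\<^sup>2 * \<bar>s\<bar>"
  define x where "x = b * s * v"
  have "b ^ 3 \<le> b"
    using b power_decreasing[of 1 3 b] by simp
  then have c: "0 \<le> 1 + b - b ^ 3"
    using b by linarith
  have X: "0 \<le> X" "X \<le> 1"
    using s b mult_mono[of "b\<^sup>2" 1 "\<bar>s\<bar>" 1] by (auto simp: X_def power_le_one)
  have "\<bar>x\<bar> = b * (\<bar>s\<bar> * \<bar>v\<bar>)"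
    using b by (simp add: x_def abs_mult)
  also have "\<dots> \<le> b * (\<bar>s\<bar> * b)"
    using b v by (intro mult_left_mono) auto
  finally have x: "\<bar>x\<bar> \<le> X"
    by (simp add: X_def power2_eq_square mult_ac)
  have "b * (1 + b * s) * (1 - s) * (1 - w) \<le> (1 + b - b ^ 3) * (1 - X) * (1 + b * X) * (1 - w)"
    using cubic_factor_le[OF b s] w b by (intro mult_right_mono) (auto simp: X_def power3_eq_cube power2_eq_square mult_ac)
  also have "\<dots> = (1 + b - b ^ 3) * (1 - X) * ((1 - w) * (1 + b * X))"
    by (simp add: mult_ac)
  also have "\<dots> \<le> (1 + b - b ^ 3) * (1 - X) * ((1 + b) * (1 - X * w))"
  proof -
    have "(1 + b) * (1 - X * w) - (1 - w) * (1 + b * X) = (b + w) * (1 - X)"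
      by algebra
    moreover have "0 \<le> (b + w) * (1 - X)"
      using w X by (intro mult_nonneg_nonneg) auto
    ultimately show ?thesis
      using c X by (intro mult_left_mono) auto
  qed
  also have "\<dots> = (1 + b) * (1 + b - b ^ 3) * ((1 - X) * (1 - X * w))"
    by (simp add: mult_ac)
  also have "\<dots> \<le> (1 + b) * (1 + b - b ^ 3) * ((1 + x) * (1 + x * w))"
  proof -
    have "(1 + x) * (1 + x * w) - (1 - X) * (1 - X * w) = (x + X) * (1 + w * (1 + x - X))"
      by algebra
    moreover have "\<bar>w * (1 + x - X)\<bar> \<le> b * 1"
      unfolding abs_mult using w x X by (intro mult_mono) auto
    then have "0 \<le> (x + X) * (1 + w * (1 + x - X))"
      using x b by (intro mult_nonneg_nonneg) auto
    ultimately show ?thesis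
      using c b by (intro mult_left_mono) auto
  qed
  finally show ?thesis
    by (simp add: x_def mult_ac)
qed

lemma binet_ratio_diff_le:
  fixes b :: real
  assumes b: "0 < b" "b < 1" and n: "1 \<le> n" "n < m"
  shows "\<bar>binet b k * binet b m / ((1 + b) * binet b (k + m))
          - binet b k * binet b n / ((1 + b) * binet b (k + n))\<bar> \<le> (1 + b - b ^ 3) * b ^ n"
proof -
  have "b ^ 3 \<le> 1"
    using b by (simp add: power_le_one)
  then have c: "0 \<le> (1 + b - b ^ 3) * b ^ n"
    using b by simp
  have pos: "0 < binet b j" for j
    using binet_pos[OF b] .
  show ?thesis
  proof (cases "k = 0")
    case True
    then show ?thesis
      using c pos[of m] pos[of n] by (simp add: binet_def)
  next
    case False
    have small: "\<bar>(-b) ^ j\<bar> \<le> b" if "1 \<le> j" for j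
      using b power_decreasing[OF that, of b] by (simp add: power_abs)
    define s v w where "s = (-b) ^ k" and "v = (-b) ^ n" and "w = (-b) ^ (m - n)"
    have s: "\<bar>s\<bar> \<le> b" and v: "\<bar>v\<bar> \<le> b" "\<bar>v\<bar> = b ^ n" and w: "\<bar>w\<bar> \<le> b"
      using False n b small by (auto simp: s_def v_def w_def power_abs)
    have "(-b) ^ m = v * w"
      unfolding v_def w_def power_add[symmetric] using n by simp
    then have binet: "binet b k = 1 + b * s" "binet b n = 1 + b * v" "binet b m = 1 + b * v * w"
      "binet b (k + m) = 1 + b * s * v * w" "binet b (k + n) = 1 + b * s * v"
      by (simp_all add: binet_def s_def v_def power_add mult.assoc)
    define Q where "Q = (1 + b * s) * (1 - s) * (1 - w)"
    have "\<bar>b * s\<bar> \<le> 1"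
      using b s by (auto simp: abs_mult intro: mult_le_one)
    then have "0 \<le> Q"
      using s w b unfolding Q_def by (intro mult_nonneg_nonneg) (auto simp: abs_le_iff)
    define D where "D = (1 + b) * binet b (k + n) * binet b (k + m)"
    have "0 < D"
      using b pos by (simp add: D_def)
    have frac: "x * y1 / (c * d1) - x * y2 / (c * d2) = x * (y1 * d2 - y2 * d1) / (c * d2 * d1)"
      if "c \<noteq> 0" "d1 \<noteq> 0" "d2 \<noteq> 0" for x y1 y2 c d1 d2 :: real
      using that by (simp add: field_simps)
    have "(1 + b * v * w) * (1 + b * s * v) - (1 + b * v) * (1 + b * s * v * w) = - (b * v * ((1 - s) * (1 - w)))"
      by algebra
    then have "binet b k * binet b m / ((1 + b) * binet b (k + m)) - binet b k * binet b n / ((1 + b) * binet b (k + n))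
        = - (b * v * Q) / D"
      using pos[of "k + m"] pos[of "k + n"] b
      by (simp add: frac D_def Q_def binet mult_ac)
    also have "\<bar>\<dots>\<bar> = b ^ n * (b * Q / D)"
      using b \<open>0 \<le> Q\<close> \<open>0 < D\<close> v(2) by (simp add: abs_mult)
    also have "\<dots> \<le> b ^ n * (1 + b - b ^ 3)"
    proof -
      have "b * Q \<le> (1 + b - b ^ 3) * D"
        using binet_cross_term_le[OF b s v(1) w] unfolding Q_def D_def binet by (simp add: mult_ac)
      then show ?thesis
        using b \<open>0 < D\<close> by (intro mult_left_mono) (simp_all add: pos_divide_le_eq)
    qed
    finally show ?thesis
      by (simp add: mult.commute)
  qed
qed

section \<open>Expectation values\<close>

lemma norm_diff_mixtures_le:
  fixes a c :: complex and x1 x2 y1 y2 A B C :: real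
  assumes "x1 * A + y1 * B = 1" "x2 * A + y2 * B = 1" "0 \<le> A" "0 \<le> B"
    and "cmod a \<le> C * A" "cmod c \<le> C * B"
  shows "cmod ((of_real x1 * a + of_real y1 * c) - (of_real x2 * a + of_real y2 * c))
    \<le> 2 * C * \<bar>x1 * A - x2 * A\<bar>"
proof -
  have yB: "(y1 - y2) * B = - ((x1 - x2) * A)"
    using assms(1,2) by (simp add: algebra_simps)
  have "cmod ((of_real x1 * a + of_real y1 * c) - (of_real x2 * a + of_real y2 * c))
      = cmod (of_real (x1 - x2) * a + of_real (y1 - y2) * c)"
    by (simp add: algebra_simps)
  also have "\<dots> \<le> \<bar>x1 - x2\<bar> * cmod a + \<bar>y1 - y2\<bar> * cmod c"
    by (rule order_trans[OF norm_triangle_ineq]) (simp only: norm_mult norm_of_real order_refl)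
  also have "\<dots> \<le> \<bar>x1 - x2\<bar> * (C * A) + \<bar>y1 - y2\<bar> * (C * B)"
    using assms(5,6) by (intro add_mono mult_left_mono) auto
  also have "\<dots> = C * \<bar>(x1 - x2) * A\<bar> + C * \<bar>(y1 - y2) * B\<bar>"
    using assms(3,4) by (simp add: abs_mult)
  also have "\<dots> = 2 * C * \<bar>x1 * A - x2 * A\<bar>"
    unfolding yB abs_minus_cancel by (simp add: left_diff_distrib)
  finally show ?thesis .
qed

lemma sqnorm_st_divide:
  "sqnorm_st N (\<lambda>\<sigma>. u \<sigma> / of_real r) = sqnorm_st N u / r\<^sup>2"
  by (simp add: sqnorm_st_def norm_divide power_divide sum_divide_distrib)

lemma expectation_psi:
  fixes xi :: "bool list \<Rightarrow> complex" and lam :: complex and d k :: nat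
  defines "X \<equiv> \<lambda>\<alpha>. xi (take d \<alpha>) * phi lam k (drop d \<alpha>)"
    and "Y \<equiv> \<lambda>\<alpha>. xi (take d \<alpha>) * phi_open_end lam k (drop d \<alpha>)"
  shows "inner_st (d + 3 * (k + j)) (psi d xi lam (k + j)) (apply_op (d + 3 * k) A (psi d xi lam (k + j)))
    = of_real (partition_fn lam j / partition_fn lam (k + j)) * inner_st (d + 3 * k) X (apply_op (d + 3 * k) A X)
    + of_real ((cmod lam)\<^sup>2 * sqnorm_st (3 * j) (phi_open_start lam j) / partition_fn lam (k + j))
      * inner_st (d + 3 * k) Y (apply_op (d + 3 * k) A Y)"
proof -
  define r where "r = norm_st (3 * (k + j)) (phi lam (k + j))"
  have r: "r\<^sup>2 = partition_fn lam (k + j)"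
    by (simp add: r_def norm_st_power2 partition_fn_def)
  have "psi d xi lam (k + j) (\<alpha> @ \<rho>)
      = X \<alpha> * (phi lam j \<rho> / of_real r) + Y \<alpha> * (lam * phi_open_start lam j \<rho> / of_real r)"
    if "length \<alpha> = d + 3 * k" "length \<rho> = 3 * j" for \<alpha> \<rho>
    using that phi_append[of "drop d \<alpha>" k \<rho> j lam]
    by (simp add: psi_def phi_hat_def X_def Y_def r_def add_divide_distrib algebra_simps)
  moreover have "phi lam j \<rho> / of_real r * (lam * phi_open_start lam j \<rho> / of_real r) = 0" for \<rho>
    using phi_mult_phi_open_start[of lam j \<rho>] by (simp add: field_simps)
  ultimately have "inner_st (d + 3 * k + 3 * j) (psi d xi lam (k + j)) (apply_op (d + 3 * k) A (psi d xi lam (k + j)))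
    = of_real (sqnorm_st (3 * j) (\<lambda>\<rho>. phi lam j \<rho> / of_real r)) * inner_st (d + 3 * k) X (apply_op (d + 3 * k) A X)
    + of_real (sqnorm_st (3 * j) (\<lambda>\<rho>. lam * phi_open_start lam j \<rho> / of_real r))
      * inner_st (d + 3 * k) Y (apply_op (d + 3 * k) A Y)"
    by (rule expectation_orthogonal_tails)
  then show ?thesis
    by (simp add: sqnorm_st_divide sqnorm_st_scale r partition_fn_def add.assoc distrib_left)
qed

lemma partition_weights_sum_1:
  assumes "lam \<noteq> 0"
  shows "partition_fn lam j / partition_fn lam (k + j) * partition_fn lam k
    + (cmod lam)\<^sup>2 * sqnorm_st (3 * j) (phi_open_start lam j) / partition_fn lam (k + j)
      * sqnorm_st (3 * k) (phi_open_end lam k) = 1"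
proof -
  have "partition_fn lam j / partition_fn lam (k + j) * partition_fn lam k
    + (cmod lam)\<^sup>2 * sqnorm_st (3 * j) (phi_open_start lam j) / partition_fn lam (k + j)
      * sqnorm_st (3 * k) (phi_open_end lam k)
    = (partition_fn lam k * partition_fn lam j + (cmod lam)\<^sup>2 * sqnorm_st (3 * k) (phi_open_end lam k)
        * sqnorm_st (3 * j) (phi_open_start lam j)) / partition_fn lam (k + j)"
    by (simp add: add_divide_distrib mult_ac)
  also have "\<dots> = 1"
    unfolding partition_fn_add[symmetric] using partition_fn_pos[OF assms, of "k + j"] by simp
  finally show ?thesis .
qed

lemma expectation_psi_diff_le:
  fixes xi :: "bool list \<Rightarrow> complex" and A :: "bool list \<Rightarrow> bool list \<Rightarrow> complex"
    and lam :: complex and d k :: nat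
  assumes "lam \<noteq> 0" and "norm_st d xi = 1"
  defines "E \<equiv> \<lambda>j. inner_st (d + 3 * (k + j)) (psi d xi lam (k + j))
    (apply_op (d + 3 * k) A (psi d xi lam (k + j)))"
  shows "cmod (E m - E n) \<le> 2 * op_norm (d + 3 * k) A
    * \<bar>partition_fn lam k * partition_fn lam m / partition_fn lam (k + m)
       - partition_fn lam k * partition_fn lam n / partition_fn lam (k + n)\<bar>"
proof -
  define M where "M = d + 3 * k"
  define X where "X = (\<lambda>\<alpha>. xi (take d \<alpha>) * phi lam k (drop d \<alpha>))"
  define Y where "Y = (\<lambda>\<alpha>. xi (take d \<alpha>) * phi_open_end lam k (drop d \<alpha>))"
  have "sqnorm_st d xi = 1"
    using assms(2) by (simp add: norm_st_power2[symmetric])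
  then have "cmod (inner_st M X (apply_op M A X)) \<le> op_norm M A * partition_fn lam k"
    and "cmod (inner_st M Y (apply_op M A Y)) \<le> op_norm M A * sqnorm_st (3 * k) (phi_open_end lam k)"
    using expectation_bound[of M X A] expectation_bound[of M Y A]
    by (simp_all add: M_def X_def Y_def partition_fn_def sqnorm_st_tensor)
  moreover have E_eq: "E j = of_real (partition_fn lam j / partition_fn lam (k + j)) * inner_st M X (apply_op M A X)
    + of_real ((cmod lam)\<^sup>2 * sqnorm_st (3 * j) (phi_open_start lam j) / partition_fn lam (k + j))
      * inner_st M Y (apply_op M A Y)" for j
    unfolding E_def M_def X_def Y_def by (rule expectation_psi)
  ultimately have "cmod (E m - E n) \<le> 2 * op_norm M A
      * \<bar>partition_fn lam m / partition_fn lam (k + m) * partition_fn lam k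
         - partition_fn lam n / partition_fn lam (k + n) * partition_fn lam k\<bar>"
    unfolding E_eq using partition_weights_sum_1[OF assms(1)] partition_fn_pos[OF assms(1), of k] sqnorm_st_nonneg
    by (intro norm_diff_mixtures_le) (simp_all add: less_imp_le)
  then show ?thesis
    by (simp add: M_def mult.commute)
qed

theorem lemma4p2:
  fixes lam :: complex and d k m n :: nat
    and xi :: "bool list \<Rightarrow> complex"
    and A :: "bool list \<Rightarrow> bool list \<Rightarrow> complex"
  assumes "lam \<noteq> 0"
    and "d \<ge> 1"
    and "norm_st d xi = 1"
    and "1 \<le> n" and "n < m"
  shows "cmod (inner_st (d + 3 * (k + m)) (psi d xi lam (k + m))
                 (apply_op (d + 3 * k) A (psi d xi lam (k + m)))
             - inner_st (d + 3 * (k + n)) (psi d xi lam (k + n))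
                 (apply_op (d + 3 * k) A (psi d xi lam (k + n))))
         \<le> 2 * (1 + beta lam - beta lam ^ 3) * op_norm (d + 3 * k) A * beta lam ^ n"
proof -
  have "\<bar>partition_fn lam k * partition_fn lam m / partition_fn lam (k + m)
      - partition_fn lam k * partition_fn lam n / partition_fn lam (k + n)\<bar>
      \<le> (1 + beta lam - beta lam ^ 3) * beta lam ^ n"
    unfolding partition_fn_ratio_binet[OF assms(1)]
    using beta_gt_0 beta_lt_1[OF assms(1)] assms(4,5) by (rule binet_ratio_diff_le)
  then have "2 * op_norm (d + 3 * k) A
      * \<bar>partition_fn lam k * partition_fn lam m / partition_fn lam (k + m)
         - partition_fn lam k * partition_fn lam n / partition_fn lam (k + n)\<bar>
      \<le> 2 * op_norm (d + 3 * k) A * ((1 + beta lam - beta lam ^ 3) * beta lam ^ n)"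
    by (intro mult_left_mono) (simp_all add: op_norm_nonneg)
  from order_trans[OF expectation_psi_diff_le[OF assms(1,3)] this] show ?thesis
    by (simp only: mult_ac)
qed

end
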